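(* Let $\Gamma\cup\{\phi\}$ be a set of formulas. Then $\mathsf{ICK}\oplus\Gamma\vdash\phi$ implies $\Gamma\models\phi$, i.e. every conditional frame validating all formulas in $\Gamma$ validates $\phi$.
   Context: Formulas are generated by $\phi ::= p\mid\bot\mid\phi\wedge\phi\mid\phi\vee\phi\mid\phi\to\phi\mid\phi\mathrel{\Box\!\!\!\rightarrow}\phi$. $\mathsf{ICK}\oplus\Gamma$ is the smallest set of formulas containing intuitionistic propositional logic, $\Gamma$, $(p\mathrel{\Box\!\!\!\rightarrow}(q\wedge r))\leftrightarrow((p\mathrel{\Box\!\!\!\rightarrow} q)\wedge(p\mathrel{\Box\!\!\!\rightarrow} r))$ and $(p\mathrel{\Box\!\!\!\rightarrow}\top)\leftrightarrow\top$, closed under uniform substitution, modus ponens, and the congruence rules for both arguments of $\mathrel{\Box\!\!\!\rightarrow}$. A conditional frame is $(X,\leq,\mathcal{R})$ with $(X,\leq)$ a nonempty preorder and $\mathcal{R}=\{R_a\mid a\text{ an upset}\}$ relations with $(\leq\circ R_a)\subseteq(R_a\circ\leq)$. Valuations assign upsets to letters; $x\models\phi\mathrel{\Box\!\!\!\rightarrow}\psi$ iff every $y$ with $xR_{V(\phi)}y$ satisfies $\psi$. *)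

theory Defs
  imports Main
begin

datatype form =
    Atom nat
  | Bot
  | Conj form form
  | Disj form form
  | Imp form form
  | Cond form form

definition Top :: form where "Top = Imp Bot Bot"
definition Iff :: "form \<Rightarrow> form \<Rightarrow> form" where
  "Iff a b = Conj (Imp a b) (Imp b a)"

fun subst :: "(nat \<Rightarrow> form) \<Rightarrow> form \<Rightarrow> form" where
  "subst s (Atom p) = s p"
| "subst s Bot = Bot"
| "subst s (Conj a b) = Conj (subst s a) (subst s b)"
| "subst s (Disj a b) = Disj (subst s a) (subst s b)"
| "subst s (Imp a b) = Imp (subst s a) (subst s b)"
| "subst s (Cond a b) = Cond (subst s a) (subst s b)"

inductive ICK :: "form set \<Rightarrow> form \<Rightarrow> bool" for \<Gamma> :: "form set" where
  ax_K: "ICK \<Gamma> (Imp a (Imp b a))"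
| ax_S: "ICK \<Gamma> (Imp (Imp a (Imp b c)) (Imp (Imp a b) (Imp a c)))"
| ax_conjE1: "ICK \<Gamma> (Imp (Conj a b) a)"
| ax_conjE2: "ICK \<Gamma> (Imp (Conj a b) b)"
| ax_conjI: "ICK \<Gamma> (Imp a (Imp b (Conj a b)))"
| ax_disjI1: "ICK \<Gamma> (Imp a (Disj a b))"
| ax_disjI2: "ICK \<Gamma> (Imp b (Disj a b))"
| ax_disjE: "ICK \<Gamma> (Imp (Imp a c) (Imp (Imp b c) (Imp (Disj a b) c)))"
| ax_efq: "ICK \<Gamma> (Imp Bot a)"
| hyp: "a \<in> \<Gamma> \<Longrightarrow> ICK \<Gamma> a"
| ax_CM: "ICK \<Gamma> (Iff (Cond (Atom 0) (Conj (Atom 1) (Atom 2)))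
                      (Conj (Cond (Atom 0) (Atom 1)) (Cond (Atom 0) (Atom 2))))"
| ax_CN: "ICK \<Gamma> (Iff (Cond (Atom 0) Top) Top)"
| us: "ICK \<Gamma> a \<Longrightarrow> ICK \<Gamma> (subst s a)"
| mp: "ICK \<Gamma> (Imp a b) \<Longrightarrow> ICK \<Gamma> a \<Longrightarrow> ICK \<Gamma> b"
| re_left: "ICK \<Gamma> (Iff a b) \<Longrightarrow> ICK \<Gamma> (Iff (Cond a c) (Cond b c))"
| re_right: "ICK \<Gamma> (Iff a b) \<Longrightarrow> ICK \<Gamma> (Iff (Cond c a) (Cond c b))"

definition upset :: "('w \<Rightarrow> 'w \<Rightarrow> bool) \<Rightarrow> 'w set \<Rightarrow> bool" where
  "upset le A \<longleftrightarrow> (\<forall>x y. x \<in> A \<and> le x y \<longrightarrow> y \<in> A)"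

text \<open>Conditional frame on the (nonempty) type 'w: a preorder le and a family
  R of relations indexed by sets (only upsets matter), with
  (le o R_a) \<subseteq> (R_a o le) for every upset a, read as:
  x le y and y R_a z imply some w with x R_a w and w le z.\<close>
definition cond_frame :: "('w \<Rightarrow> 'w \<Rightarrow> bool) \<Rightarrow> ('w set \<Rightarrow> 'w \<Rightarrow> 'w \<Rightarrow> bool) \<Rightarrow> bool" where
  "cond_frame le R \<longleftrightarrow>
     (\<forall>x. le x x) \<and> (\<forall>x y z. le x y \<and> le y z \<longrightarrow> le x z) \<and>
     (\<forall>a. upset le a \<longrightarrow> (\<forall>x y z. le x y \<and> R a y z \<longrightarrow> (\<exists>w. R a x w \<and> le w z)))"

fun sat :: "('w \<Rightarrow> 'w \<Rightarrow> bool) \<Rightarrow> ('w set \<Rightarrow> 'w \<Rightarrow> 'w \<Rightarrow> bool) \<Rightarrow> (nat \<Rightarrow> 'w set) \<Rightarrow> 'w \<Rightarrow> form \<Rightarrow> bool" where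
  "sat le R V x (Atom p) = (x \<in> V p)"
| "sat le R V x Bot = False"
| "sat le R V x (Conj a b) = (sat le R V x a \<and> sat le R V x b)"
| "sat le R V x (Disj a b) = (sat le R V x a \<or> sat le R V x b)"
| "sat le R V x (Imp a b) = (\<forall>y. le x y \<longrightarrow> sat le R V y a \<longrightarrow> sat le R V y b)"
| "sat le R V x (Cond a b) = (\<forall>y. R {z. sat le R V z a} x y \<longrightarrow> sat le R V y b)"

definition valid_frame :: "('w \<Rightarrow> 'w \<Rightarrow> bool) \<Rightarrow> ('w set \<Rightarrow> 'w \<Rightarrow> 'w \<Rightarrow> bool) \<Rightarrow> form \<Rightarrow> bool" where
  "valid_frame le R \<phi> \<longleftrightarrow>
     (\<forall>V. (\<forall>p. upset le (V p)) \<longrightarrow> (\<forall>x. sat le R V x \<phi>))"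

end

theory Submission
  imports Defs
begin

text \<open>Truth sets of formulas are upsets (persistence),
  which in the case of the conditional is exactly what the frame condition
  \<open>(\<le> \<circ> R\<^sub>a) \<subseteq> (R\<^sub>a \<circ> \<le>)\<close> provides; hence substituting formulas for letters amounts to
  evaluating under another admissible valuation. And the truth of \<open>a \<box>\<rightarrow> b\<close> depends on
  \<open>a\<close> only through its truth set, which gives the congruence rules.\<close>

lemma cond_frame_refl: "cond_frame le R \<Longrightarrow> le x x"
  unfolding cond_frame_def by blast

lemma cond_frame_trans: "cond_frame le R \<Longrightarrow> le x y \<Longrightarrow> le y z \<Longrightarrow> le x z"
  unfolding cond_frame_def by blast

lemma sat_persistent:
  assumes frame: "cond_frame le R" and up: "\<forall>p. upset le (V p)"
  shows "sat le R V x a \<Longrightarrow> le x y \<Longrightarrow> sat le R V y a"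
proof (induction a arbitrary: x y)
  case (Atom p)
  then show ?case using up by (simp add: upset_def)
next
  case (Conj a b)
  then show ?case by (simp only: sat.simps) blast
next
  case (Disj a b)
  then show ?case by (simp only: sat.simps) blast
next
  case (Imp a b)
  then show ?case using cond_frame_trans[OF frame] by (simp only: sat.simps) blast
next
  case (Cond a b)
  have "upset le {z. sat le R V z a}"
    using Cond.IH(1) by (simp add: upset_def) blast
  show ?case
  proof (simp only: sat.simps, intro allI impI)
    fix z assume "R {z. sat le R V z a} y z"
    then obtain w where "R {z. sat le R V z a} x w" "le w z"
      using frame \<open>upset le {z. sat le R V z a}\<close> \<open>le x y\<close> unfolding cond_frame_def by blast
    then show "sat le R V z b" using Cond.prems(1) Cond.IH(2) by simp blast
  qed
qed simp

lemma upset_sat: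
  "cond_frame le R \<Longrightarrow> \<forall>p. upset le (V p) \<Longrightarrow> upset le {z. sat le R V z a}"
  using sat_persistent[of le R V] unfolding upset_def by blast

lemma sat_subst:
  "sat le R V x (subst s a) = sat le R (\<lambda>p. {z. sat le R V z (s p)}) x a"
proof (induction a arbitrary: x)
  case (Cond a b)
  have "{z. sat le R V z (subst s a)} = {z. sat le R (\<lambda>p. {z. sat le R V z (s p)}) z a}"
    using Cond.IH(1) by auto
  then show ?case using Cond.IH(2) by simp
qed auto

lemma valid_frame_Iff:
  assumes "\<And>x. le x x"
  shows "valid_frame le R (Iff a b) \<longleftrightarrow>
    (\<forall>V. (\<forall>p. upset le (V p)) \<longrightarrow> {x. sat le R V x a} = {x. sat le R V x b})"
  unfolding valid_frame_def Iff_def set_eq_iff by (simp only: sat.simps mem_Collect_eq) (meson assms)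

lemma valid_frame_K:
  assumes frame: "cond_frame le R"
  shows "valid_frame le R (Imp a (Imp b a))"
  unfolding valid_frame_def
proof (intro allI impI, simp only: sat.simps, intro allI impI)
  fix V x y z
  assume up: "\<forall>p. upset le (V p)" and "le x y" "sat le R V y a" "le y z" "sat le R V z b"
  then show "sat le R V z a" using sat_persistent[OF frame up] by simp
qed

lemma valid_frame_S:
  assumes frame: "cond_frame le R"
  shows "valid_frame le R (Imp (Imp a (Imp b c)) (Imp (Imp a b) (Imp a c)))"
  unfolding valid_frame_def
proof (intro allI impI, simp only: sat.simps, intro allI impI)
  fix V x y z w
  assume "\<forall>p. upset le (V p)" and "le x y"
    and abc: "\<forall>u. le y u \<longrightarrow> sat le R V u a \<longrightarrow>
      (\<forall>v. le u v \<longrightarrow> sat le R V v b \<longrightarrow> sat le R V v c)"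
    and "le y z" and ab: "\<forall>u. le z u \<longrightarrow> sat le R V u a \<longrightarrow> sat le R V u b"
    and "le z w" and "sat le R V w a"
  have "le y w" using cond_frame_trans[OF frame \<open>le y z\<close> \<open>le z w\<close>] .
  moreover have "sat le R V w b" using ab \<open>le z w\<close> \<open>sat le R V w a\<close> by blast
  ultimately show "sat le R V w c"
    using abc cond_frame_refl[OF frame] \<open>sat le R V w a\<close> by blast
qed

lemma valid_frame_conjI:
  assumes frame: "cond_frame le R"
  shows "valid_frame le R (Imp a (Imp b (Conj a b)))"
  unfolding valid_frame_def
proof (intro allI impI, simp only: sat.simps, intro allI impI conjI)
  fix V x y z
  assume up: "\<forall>p. upset le (V p)" and "le x y" "sat le R V y a" "le y z" "sat le R V z b"
  then show "sat le R V z a" using sat_persistent[OF frame up] by simp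
qed

lemma valid_frame_disjE:
  "cond_frame le R \<Longrightarrow> valid_frame le R (Imp (Imp a c) (Imp (Imp b c) (Imp (Disj a b) c)))"
  unfolding valid_frame_def by (simp only: sat.simps) (blast dest: cond_frame_trans)

lemma valid_frame_Cond_Conj:
  "valid_frame le R (Iff (Cond a (Conj b c)) (Conj (Cond a b) (Cond a c)))"
  unfolding valid_frame_def Iff_def by (simp only: sat.simps) blast

lemma valid_frame_Cond_Top: "valid_frame le R (Iff (Cond a Top) Top)"
  unfolding valid_frame_def Iff_def Top_def by simp

lemma valid_frame_subst:
  assumes frame: "cond_frame le R" and "valid_frame le R a"
  shows "valid_frame le R (subst s a)"
  using assms upset_sat[OF frame] unfolding valid_frame_def sat_subst by simp

lemma valid_frame_mp:
  assumes frame: "cond_frame le R"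
    and "valid_frame le R (Imp a b)" and "valid_frame le R a"
  shows "valid_frame le R b"
  unfolding valid_frame_def
proof (intro allI impI)
  fix V :: "nat \<Rightarrow> 'a set" and x assume "\<forall>p. upset le (V p)"
  then have "sat le R V x (Imp a b)" and "sat le R V x a"
    using assms unfolding valid_frame_def by blast+
  then show "sat le R V x b" using cond_frame_refl[OF frame] by simp
qed

lemma valid_frame_Cond_cong_left:
  "cond_frame le R \<Longrightarrow> valid_frame le R (Iff a b) \<Longrightarrow> valid_frame le R (Iff (Cond a c) (Cond b c))"
  by (simp add: valid_frame_Iff cond_frame_refl)

lemma valid_frame_Cond_cong_right:
  "cond_frame le R \<Longrightarrow> valid_frame le R (Iff a b) \<Longrightarrow> valid_frame le R (Iff (Cond c a) (Cond c b))"
  by (simp add: valid_frame_Iff cond_frame_refl set_eq_iff)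

theorem theorem4p8:
  fixes \<Gamma> :: "form set" and \<phi> :: form
    and le :: "'w \<Rightarrow> 'w \<Rightarrow> bool" and R :: "'w set \<Rightarrow> 'w \<Rightarrow> 'w \<Rightarrow> bool"
  assumes "ICK \<Gamma> \<phi>"
    and "cond_frame le R"
    and "\<forall>\<psi>\<in>\<Gamma>. valid_frame le R \<psi>"
  shows "valid_frame le R \<phi>"
  using assms
proof (induction rule: ICK.induct)
  case (us a s)
  then show ?case by (simp add: valid_frame_subst)
next
  case (mp a b)
  then show ?case by (blast intro: valid_frame_mp)
next
  case (re_left a b c)
  then show ?case by (simp add: valid_frame_Cond_cong_left)
next
  case (re_right a b c)
  then show ?case by (simp add: valid_frame_Cond_cong_right)
qed (simp_all add: valid_frame_K valid_frame_S valid_frame_conjI valid_frame_disjE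
    valid_frame_Cond_Conj valid_frame_Cond_Top, simp_all add: valid_frame_def)

end
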